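(* Let $\mathscr H$ be a reproducing kernel Hilbert space of complex-valued holomorphic functions on $\mathbb D^2$ such that multiplication by $z_1$ and by $z_2$ define bounded operators $\mathscr M_{z_1},\mathscr M_{z_2}$ on $\mathscr H$. If $\mathscr H$ has the division property, then for every $\lambda=(\lambda_1,\lambda_2)\in\mathbb D^2$ the Koszul complex of $\mathscr M_z-\lambda=(\mathscr M_{z_1}-\lambda_1,\mathscr M_{z_2}-\lambda_2)$ is exact at the middle stage; that is, whenever $g,h\in\mathscr H$ satisfy $(\mathscr M_{z_1}-\lambda_1)g+(\mathscr M_{z_2}-\lambda_2)h=0$, there exists $k\in\mathscr H$ with $g=(\mathscr M_{z_2}-\lambda_2)k$ and $h=-(\mathscr M_{z_1}-\lambda_1)k$.
   Context: $\mathbb D$ is the open unit disc. A Hilbert space $\mathscr H$ of holomorphic functions on $\mathbb D^2$ has the division property if for each $j\in\{1,2\}$, whenever $\lambda\in\mathbb D^2$ and $f\in\mathscr H$ vanishes on $\{z\in\mathbb D^2:z_j=\lambda_j\}$, the holomorphic function $f(z)/(z_j-\lambda_j)$ belongs to $\mathscr H$. For a commuting pair $T=(T_1,T_2)$ on $\mathscr H$, the Koszul complex is $0\to\mathscr H\xrightarrow{B_2}\mathscr H\oplus\mathscr H\xrightarrow{B_1}\mathscr H\to0$ with $B_2h=(T_2h,-T_1h)$ and $B_1(h_1,h_2)=T_1h_1+T_2h_2$; exactness at the middle stage means $\ker B_1=\operatorname{ran}B_2$. *)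

theory Defs
  imports "HOL-Analysis.Analysis"
begin

definition bidisc :: "(complex \<times> complex) set" where
  "bidisc = ball 0 1 \<times> ball 0 1"

definition holo_bidisc :: "(complex \<times> complex \<Rightarrow> complex) \<Rightarrow> bool" where
  "holo_bidisc f \<longleftrightarrow>
     (\<forall>z\<in>bidisc. \<exists>a b. (f has_derivative (\<lambda>w. a * fst w + b * snd w)) (at z))"

definition coord :: "nat \<Rightarrow> complex \<times> complex \<Rightarrow> complex" where
  "coord j z = (if j = 1 then fst z else snd z)"

definition Mz :: "nat \<Rightarrow> (complex \<times> complex \<Rightarrow> complex) \<Rightarrow> (complex \<times> complex \<Rightarrow> complex)" where
  "Mz j f = (\<lambda>z. coord j z * f z)"

definition hnorm :: "('f \<Rightarrow> 'f \<Rightarrow> complex) \<Rightarrow> 'f \<Rightarrow> real" where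
  "hnorm ip f = sqrt (Re (ip f f))"

definition hilbert_fun_space ::
  "(complex \<times> complex \<Rightarrow> complex) set \<Rightarrow>
   ((complex \<times> complex \<Rightarrow> complex) \<Rightarrow> (complex \<times> complex \<Rightarrow> complex) \<Rightarrow> complex) \<Rightarrow> bool" where
  "hilbert_fun_space H ip \<longleftrightarrow>
     (\<lambda>z. 0) \<in> H \<and>
     (\<forall>f\<in>H. \<forall>g\<in>H. (\<lambda>z. f z + g z) \<in> H) \<and>
     (\<forall>c. \<forall>f\<in>H. (\<lambda>z. c * f z) \<in> H) \<and>
     (\<forall>f\<in>H. \<forall>g\<in>H. \<forall>h\<in>H. ip (\<lambda>z. f z + g z) h = ip f h + ip g h) \<and>
     (\<forall>c. \<forall>f\<in>H. \<forall>g\<in>H. ip (\<lambda>z. c * f z) g = c * ip f g) \<and>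
     (\<forall>f\<in>H. \<forall>g\<in>H. ip g f = cnj (ip f g)) \<and>
     (\<forall>f\<in>H. Im (ip f f) = 0 \<and> Re (ip f f) \<ge> 0) \<and>
     (\<forall>f\<in>H. ip f f = 0 \<longrightarrow> f = (\<lambda>z. 0)) \<and>
     (\<forall>u :: nat \<Rightarrow> (complex \<times> complex \<Rightarrow> complex).
        (\<forall>n. u n \<in> H) \<and>
        (\<forall>e>0. \<exists>N. \<forall>m\<ge>N. \<forall>n\<ge>N. hnorm ip (\<lambda>z. u m z - u n z) < e) \<longrightarrow>
        (\<exists>f\<in>H. (\<lambda>n. hnorm ip (\<lambda>z. u n z - f z)) \<longlonglongrightarrow> 0))"

text \<open>Elements are represented by functions on complex x complex vanishing outside
  the bidisc; point evaluations at points of the bidisc are bounded.\<close>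
definition rkhs_bidisc ::
  "(complex \<times> complex \<Rightarrow> complex) set \<Rightarrow>
   ((complex \<times> complex \<Rightarrow> complex) \<Rightarrow> (complex \<times> complex \<Rightarrow> complex) \<Rightarrow> complex) \<Rightarrow> bool" where
  "rkhs_bidisc H ip \<longleftrightarrow>
     hilbert_fun_space H ip \<and>
     (\<forall>f\<in>H. holo_bidisc f \<and> (\<forall>z. z \<notin> bidisc \<longrightarrow> f z = 0)) \<and>
     (\<forall>z\<in>bidisc. \<exists>C. \<forall>f\<in>H. cmod (f z) \<le> C * hnorm ip f)"

definition bounded_Mz ::
  "(complex \<times> complex \<Rightarrow> complex) set \<Rightarrow>
   ((complex \<times> complex \<Rightarrow> complex) \<Rightarrow> (complex \<times> complex \<Rightarrow> complex) \<Rightarrow> complex) \<Rightarrow> nat \<Rightarrow> bool" where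
  "bounded_Mz H ip j \<longleftrightarrow>
     (\<forall>f\<in>H. Mz j f \<in> H) \<and> (\<exists>C. \<forall>f\<in>H. hnorm ip (Mz j f) \<le> C * hnorm ip f)"

definition division_property :: "(complex \<times> complex \<Rightarrow> complex) set \<Rightarrow> bool" where
  "division_property H \<longleftrightarrow>
     (\<forall>j\<in>{1,2::nat}. \<forall>l\<in>bidisc. \<forall>f\<in>H.
        (\<forall>z\<in>bidisc. coord j z = coord j l \<longrightarrow> f z = 0) \<longrightarrow>
        (\<exists>g\<in>H. \<forall>z\<in>bidisc. f z = (coord j z - coord j l) * g z))"

end

theory Submission
  imports Defs
begin

text \<open>Since \<open>(z\<^sub>1 - \<lambda>\<^sub>1) g + (z\<^sub>2 - \<lambda>\<^sub>2) h = 0\<close>, the function \<open>g\<close> vanishes on the slice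
  \<open>z\<^sub>2 = \<lambda>\<^sub>2\<close> away from the single point \<open>z\<^sub>1 = \<lambda>\<^sub>1\<close>, hence everywhere on it by continuity.
  The division property then gives \<open>k\<close> with \<open>g = (z\<^sub>2 - \<lambda>\<^sub>2) k\<close>, and cancelling \<open>z\<^sub>2 - \<lambda>\<^sub>2\<close>
  yields \<open>h = -(z\<^sub>1 - \<lambda>\<^sub>1) k\<close> off the slice, hence on all of \<open>\<bbbD>\<^sup>2\<close> by continuity again.\<close>

lemma open_bidisc: "open bidisc"
  unfolding bidisc_def by (intro open_Times) auto

lemma holo_bidisc_imp_continuous_on: "holo_bidisc f \<Longrightarrow> continuous_on bidisc f"
  unfolding holo_bidisc_def
  by (intro continuous_at_imp_continuous_on) (blast intro: has_derivative_continuous)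

lemma continuous_on_eq_off_empty_interior:
  fixes f g :: "'a::topological_space \<Rightarrow> 'b::t2_space"
  assumes "open S" "continuous_on S f" "continuous_on S g" "interior T = {}"
    and "\<And>y. y \<in> S - T \<Longrightarrow> f y = g y" and "x \<in> S"
  shows "f x = g x"
proof -
  have "continuous_on S (\<lambda>y. (f y, g y))"
    using assms(2,3) by (rule continuous_on_Pair)
  then have "open ((\<lambda>y. (f y, g y)) -` {(a, b) |a b. a \<noteq> b} \<inter> S)"
    using open_diagonal_complement continuous_on_open_vimage[OF assms(1)] by blast
  moreover have "(\<lambda>y. (f y, g y)) -` {(a, b) |a b. a \<noteq> b} \<inter> S = {y \<in> S. f y \<noteq> g y}"
    by auto
  ultimately have "open {y \<in> S. f y \<noteq> g y}"
    by simp
  moreover have "{y \<in> S. f y \<noteq> g y} \<subseteq> T"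
    using assms(5) by blast
  ultimately have "{y \<in> S. f y \<noteq> g y} = {}"
    using assms(4) interior_maximal by blast
  then show ?thesis
    using assms(6) by blast
qed

lemma koszul_cycle_vanishes_on_slice:
  assumes g: "continuous_on bidisc g" and l: "l \<in> bidisc"
    and cycle: "\<And>z. (fst z - fst l) * g z + (snd z - snd l) * h z = 0"
    and z: "z \<in> bidisc" "snd z = snd l"
  shows "g z = 0"
proof -
  have slice_cont: "continuous_on (ball 0 1) (\<lambda>w. g (w, snd l))"
  proof (rule continuous_on_compose2[OF g])
    show "continuous_on (ball 0 1) (\<lambda>w. (w, snd l))"
      by (intro continuous_intros)
    show "(\<lambda>w. (w, snd l)) ` ball 0 1 \<subseteq> bidisc"
      using l by (auto simp: bidisc_def mem_Times_iff)
  qed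
  have slice_vanishes: "g (w, snd l) = 0" if "w \<in> ball 0 1 - {fst l}" for w
    using cycle[of "(w, snd l)"] that by simp
  have "g (fst z, snd l) = 0"
    using continuous_on_eq_off_empty_interior[of "ball 0 1" "\<lambda>w. g (w, snd l)" "\<lambda>_. 0" "{fst l}"]
      slice_cont slice_vanishes z by (auto simp: bidisc_def mem_Times_iff)
  then show ?thesis
    using z by (metis prod.collapse)
qed

lemma koszul_cycle_second_component:
  assumes h: "continuous_on bidisc h" and k: "continuous_on bidisc k"
    and cycle: "\<And>z. (fst z - fst l) * g z + (snd z - snd l) * h z = 0"
    and g: "\<And>z. g z = (snd z - snd l) * k z"
    and z: "z \<in> bidisc"
  shows "h z = - ((fst z - fst l) * k z)"
proof (rule continuous_on_eq_off_empty_interior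
    [of bidisc h "\<lambda>z. - ((fst z - fst l) * k z)" "UNIV \<times> {snd l}"])
  show "continuous_on bidisc (\<lambda>z. - ((fst z - fst l) * k z))"
    using k by (intro continuous_intros)
  show "interior (UNIV \<times> {snd l}) = {}"
    by (simp add: interior_Times)
  fix y assume "y \<in> bidisc - UNIV \<times> {snd l}"
  then have "snd y \<noteq> snd l"
    by (auto simp: mem_Times_iff)
  moreover have "(snd y - snd l) * ((fst y - fst l) * k y + h y) = 0"
    using cycle[of y] g[of y] by (simp add: algebra_simps)
  ultimately show "h y = - ((fst y - fst l) * k y)"
    by (simp add: add_eq_0_iff2)
qed (use open_bidisc h z in auto)

theorem lemma4p3:
  fixes H :: "(complex \<times> complex \<Rightarrow> complex) set"
    and ip :: "(complex \<times> complex \<Rightarrow> complex) \<Rightarrow> (complex \<times> complex \<Rightarrow> complex) \<Rightarrow> complex"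
  assumes "rkhs_bidisc H ip"
    and "bounded_Mz H ip 1" and "bounded_Mz H ip 2"
    and "division_property H"
    and "l \<in> bidisc"
    and "g \<in> H" and "h \<in> H"
    and "(\<lambda>z. (Mz 1 g z - fst l * g z) + (Mz 2 h z - snd l * h z)) = (\<lambda>z. 0)"
  shows "\<exists>k\<in>H. g = (\<lambda>z. Mz 2 k z - snd l * k z) \<and> h = (\<lambda>z. - (Mz 1 k z - fst l * k z))"
proof -
  have cont: "continuous_on bidisc f" and outside: "z \<notin> bidisc \<Longrightarrow> f z = 0"
    if "f \<in> H" for f z
    using assms(1) that holo_bidisc_imp_continuous_on unfolding rkhs_bidisc_def by blast+
  have cycle: "(fst z - fst l) * g z + (snd z - snd l) * h z = 0" for z
    using fun_cong[OF assms(8), of z] by (simp add: Mz_def coord_def algebra_simps)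
  have "\<exists>k\<in>H. \<forall>z\<in>bidisc. g z = (coord 2 z - coord 2 l) * k z"
    using assms(4-6) koszul_cycle_vanishes_on_slice[OF cont[OF assms(6)] assms(5) cycle]
    unfolding division_property_def by (auto simp: coord_def)
  then obtain k where "k \<in> H" and "\<And>z. z \<in> bidisc \<Longrightarrow> g z = (snd z - snd l) * k z"
    by (auto simp: coord_def)
  then have gk: "g z = (snd z - snd l) * k z" for z
    using outside[OF assms(6)] outside[OF \<open>k \<in> H\<close>] by (cases "z \<in> bidisc") auto
  have hk: "h z = - ((fst z - fst l) * k z)" for z
    using koszul_cycle_second_component[OF cont[OF assms(7)] cont[OF \<open>k \<in> H\<close>] cycle gk]
      outside[OF assms(7)] outside[OF \<open>k \<in> H\<close>] by (cases "z \<in> bidisc") auto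
  show ?thesis
    using \<open>k \<in> H\<close> by (intro bexI[of _ k] conjI ext) (simp_all add: gk hk Mz_def coord_def algebra_simps)
qed

end
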